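(* Let $N\ge2$, $\hbar>0$, $\lambda\in\mathbb{R}^N$, $\mu^{(N)}_i=-\imath\hbar^{-1}\lambda_i-\frac12(N-2i+1)$, and let $\xi^{(i)}_R,\xi^{(i)}_L$ ($i=1,\dots,N-1$) be nonzero complex numbers. Consider functions of the real variables $T_{k,i}$, $1\le i\le k\le N-1$, with the convention $T_{N,i}=0$, and the first order differential operators $$E^{(N)}_{i,i+1}=\sum_{n=1}^i\Big(\sum_{k=n}^ie^{T_{N+k-i,k}-T_{N+k-i-1,k}}\Big)\Big(\frac{\partial}{\partial T_{N+n-i-1,n}}-\frac{\partial}{\partial T_{N+n-i-1,n-1}}\Big),$$ $$E^{(N)}_{i+1,i}=\sum_{k=i}^{N-1}e^{T_{k,i}-T_{k+1,i+1}}\Big(\mu^{(N)}_i-\mu^{(N)}_{i+1}+\sum_{s=i}^k\Big(\frac{\partial}{\partial T_{s,i+1}}-\frac{\partial}{\partial T_{s,i}}\Big)\Big),$$ for $i=1,\dots,N-1$ (derivatives with respect to symbols $T_{k,j}$ with $j>k$ or $j=0$ are omitted, empty sums are zero). Then the functions $$\psi^{(N)}_R=\exp\Big\{\sum_{i=1}^{N-1}\xi^{(i)}_R\sum_{k=i}^{N-1}e^{T_{k,i}-T_{k+1,i+1}}\Big\},$$ $$\psi^{(N)}_L=\exp\Big\{\sum_{k=1}^{N-1}\sum_{i=1}^k(\mu^{(N)}_k-\mu^{(N)}_{k+1})T_{k,i}+\sum_{i=1}^{N-1}\xi^{(i)}_L\sum_{k=1}^{N-i}e^{T_{k+i,k}-T_{k+i-1,k}}\Big\}$$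 satisfy, for all $i=1,\dots,N-1$, $$E^{(N)}_{i,i+1}\psi^{(N)}_R=\xi^{(i)}_R\psi^{(N)}_R,\qquad E^{(N)}_{i+1,i}\psi^{(N)}_L=\xi^{(N-i)}_L\psi^{(N)}_L.$$
   Context: These operators are the images of the simple root generators of $\mathfrak{gl}(N)$ in the principal series representation realized on functions of the totally positive unipotent upper-triangular matrices, parametrized by the coordinates $T_{k,i}$ ($1\le i\le k\le N-1$, $T_{N,i}=0$) via $x(T)=\tilde U_2U_2^{-1}\cdots\tilde U_{N-1}U_{N-1}^{-1}\tilde U_N$ with $U_k=\sum_{i\le k}e^{T_{k,i}}e_{i,i}+\sum_{i>k}e_{i,i}$, $\tilde U_k=U_k+\sum_{i=1}^{k-1}e^{T_{k-1,i}}e_{i,i+1}$. *)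

theory Defs
  imports "HOL-Analysis.Analysis"
begin

text \<open>Points are functions T :: nat => nat => real; only the coordinates T k i with
  1 <= i <= k <= N-1 are variables. Tc implements the convention T_{N,i} = 0.\<close>

definition Tc :: "nat \<Rightarrow> (nat \<Rightarrow> nat \<Rightarrow> real) \<Rightarrow> nat \<Rightarrow> nat \<Rightarrow> real" where
  "Tc N T k i = (if 1 \<le> i \<and> i \<le> k \<and> k < N then T k i else 0)"

definition pd :: "nat \<Rightarrow> nat \<Rightarrow> nat \<Rightarrow> ((nat \<Rightarrow> nat \<Rightarrow> real) \<Rightarrow> complex)
                   \<Rightarrow> (nat \<Rightarrow> nat \<Rightarrow> real) \<Rightarrow> complex" where
  "pd N k j f T = (if 1 \<le> j \<and> j \<le> k \<and> k < N
      then vector_derivative (\<lambda>t::real. f (T(k := (T k)(j := t)))) (at (T k j))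
      else 0)"

definition mu :: "nat \<Rightarrow> real \<Rightarrow> (nat \<Rightarrow> real) \<Rightarrow> nat \<Rightarrow> complex" where
  "mu N hbar lam i = - \<i> * complex_of_real (lam i / hbar)
                     - complex_of_real ((real N - 2 * real i + 1) / 2)"

definition E_up :: "nat \<Rightarrow> nat \<Rightarrow> ((nat \<Rightarrow> nat \<Rightarrow> real) \<Rightarrow> complex)
                    \<Rightarrow> (nat \<Rightarrow> nat \<Rightarrow> real) \<Rightarrow> complex" where
  "E_up N i f T = (\<Sum>n = 1..i.
      (\<Sum>k = n..i. complex_of_real (exp (Tc N T (N + k - i) k - Tc N T (N + k - i - 1) k)))
      * (pd N (N + n - i - 1) n f T - pd N (N + n - i - 1) (n - 1) f T))"

definition E_down :: "nat \<Rightarrow> real \<Rightarrow> (nat \<Rightarrow> real) \<Rightarrow> nat \<Rightarrow> ((nat \<Rightarrow> nat \<Rightarrow> real) \<Rightarrow> complex)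
                    \<Rightarrow> (nat \<Rightarrow> nat \<Rightarrow> real) \<Rightarrow> complex" where
  "E_down N hbar lam i f T = (\<Sum>k = i..N - 1.
      complex_of_real (exp (Tc N T k i - Tc N T (k + 1) (i + 1)))
      * ((mu N hbar lam i - mu N hbar lam (i + 1)) * f T
         + (\<Sum>s = i..k. pd N s (i + 1) f T - pd N s i f T)))"

definition psiR :: "nat \<Rightarrow> (nat \<Rightarrow> complex) \<Rightarrow> (nat \<Rightarrow> nat \<Rightarrow> real) \<Rightarrow> complex" where
  "psiR N xiR T = exp (\<Sum>i = 1..N - 1. xiR i *
      (\<Sum>k = i..N - 1. complex_of_real (exp (Tc N T k i - Tc N T (k + 1) (i + 1)))))"

definition psiL :: "nat \<Rightarrow> real \<Rightarrow> (nat \<Rightarrow> real) \<Rightarrow> (nat \<Rightarrow> complex)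
                    \<Rightarrow> (nat \<Rightarrow> nat \<Rightarrow> real) \<Rightarrow> complex" where
  "psiL N hbar lam xiL T = exp (
      (\<Sum>k = 1..N - 1. \<Sum>i = 1..k.
          (mu N hbar lam k - mu N hbar lam (k + 1)) * complex_of_real (Tc N T k i))
    + (\<Sum>i = 1..N - 1. xiL i *
          (\<Sum>k = 1..N - i. complex_of_real (exp (Tc N T (k + i) k - Tc N T (k + i - 1) k)))))"

end

theory Submission
  imports Defs
begin

(* Both eigenfunctions are exponentials, so each first-order operator acts on them as
   multiplication by a combination of first derivatives of the exponent.  Such a derivative is
   the difference of two neighbouring exponential terms of the exponent: along a diagonal
   T_{m+n,n} for psiR, along a column T_{s,j} for psiL.  After multiplication by the
   exponential coefficients of E_{i,i+1} resp. E_{i+1,i}, the resulting double sums telescope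
   twice, and only a boundary term survives, whose exponential is 1 by the convention T_{N,i} = 0. *)

lemma Tc_fun_upd:
  assumes "1 \<le> j" "j \<le> k" "k < N"
  shows "Tc N (T(k := (T k)(j := t))) a b = Tc N T a b + of_bool (a = k \<and> b = j) * (t - T k j)"
  using assms by (auto simp: Tc_def)

lemma pd_exp:
  assumes "1 \<le> j" "j \<le> k" "k < N"
    and "((\<lambda>t. \<Phi> (T(k := (T k)(j := t)))) has_vector_derivative D) (at (T k j))"
  shows "pd N k j (\<lambda>T. exp (\<Phi> T)) T = exp (\<Phi> T) * D"
proof -
  have "((exp \<circ> (\<lambda>t. \<Phi> (T(k := (T k)(j := t))))) has_vector_derivative (D * exp (\<Phi> T))) (at (T k j))"
    by (rule field_vector_diff_chain_at[OF assms(4)]) (simp add: DERIV_exp)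
  then show ?thesis
    using assms(1-3) by (simp add: pd_def o_def vector_derivative_at mult.commute)
qed

lemma of_real_of_bool [simp]: "of_real (of_bool P) = of_bool P"
  by (cases P) simp_all

lemma sum_sum_of_bool_mult:
  fixes f :: "'i \<Rightarrow> 'k \<Rightarrow> 'a::semiring_1"
  assumes "finite A" "\<And>i. finite (B i)"
  shows "(\<Sum>i\<in>A. \<Sum>k\<in>B i. of_bool (k = c \<and> i = b) * f i k) = of_bool (b \<in> A \<and> c \<in> B b) * f b c"
proof -
  have of_bool_mult: "of_bool P * x = (if P then x else 0)" for P and x :: 'a
    by simp
  have "(\<Sum>k\<in>B i. if k = c \<and> i = b then f i k else 0) = (if i = b then of_bool (c \<in> B b) * f b c else 0)" for i
    using assms(2)[of i] by (cases "i = b") simp_all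
  then show ?thesis
    using assms(1) by (simp add: of_bool_mult)
qed

lemma sum_atLeastAtMost_triangle_swap:
  fixes m i :: nat
  shows "(\<Sum>n = m..i. \<Sum>k = n..i. f n k) = (\<Sum>k = m..i. \<Sum>n = m..k. f n k)"
proof -
  have "(\<Sum>n = m..i. \<Sum>k = n..i. f n k) = (\<Sum>n\<in>{m..i}. \<Sum>k\<in>{k. k \<in> {m..i} \<and> n \<le> k}. f n k)"
    by (intro sum.cong refl) auto
  also have "\<dots> = (\<Sum>k\<in>{m..i}. \<Sum>n\<in>{n. n \<in> {m..i} \<and> n \<le> k}. f n k)"
    by (rule sum.swap_restrict) simp_all
  also have "\<dots> = (\<Sum>k = m..i. \<Sum>n = m..k. f n k)"
    by (intro sum.cong refl) auto
  finally show ?thesis .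
qed

lemma of_real_exp_diff_mult:
  "(of_real (exp (a - b)) :: 'a::real_algebra_1) * of_real (exp (b - c)) = of_real (exp (a - c))"
  by (simp flip: of_real_mult exp_add)

(* Along a diagonal u n = T_{m+n,n} the exponent of psiR has the terms diag_term xiR u n,
   n >= 1; the value 0 at n = 0 is the boundary value of the telescoping sums. *)
definition diag_term :: "(nat \<Rightarrow> complex) \<Rightarrow> (nat \<Rightarrow> real) \<Rightarrow> nat \<Rightarrow> complex" where
  "diag_term xi u n = (if n = 0 then 0 else xi n * complex_of_real (exp (u n - u (Suc n))))"

lemma diag_term_tail_sums_telescope:
  fixes u v :: "nat \<Rightarrow> real" and xi :: "nat \<Rightarrow> complex"
  shows "(\<Sum>n = 1..i. (\<Sum>k = n..i. complex_of_real (exp (v k - u k))) *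
      ((diag_term xi u n - diag_term xi u (n - 1)) - (diag_term xi v (n - 1) - diag_term xi v (n - 2))))
    = (if i = 0 then 0 else xi i * complex_of_real (exp (v i - u (Suc i))))"
proof -
  define V where "V k = complex_of_real (exp (v k - u k))" for k
  define f where "f n = diag_term xi u n - diag_term xi v (n - 1)" for n
  define g where "g k = (if k = 0 then 0 else xi k * complex_of_real (exp (v k - u (Suc k))))" for k
  have f_partial: "(\<Sum>n = 1..k. f n - f (n - 1)) = f k" for k
    using sum_telescope''[of 0 k f] by (simp add: f_def diag_term_def)
  have Vf: "V k * f k = g k - g (k - 1)" if "1 \<le> k" for k
  proof -
    have "V k * diag_term xi u k = g k"
      using that of_real_exp_diff_mult[where 'a = complex, of "v k" "u k" "u (Suc k)"]
      by (simp add: V_def g_def diag_term_def mult.left_commute)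
    moreover have "V k * diag_term xi v (k - 1) = g (k - 1)"
      using that of_real_exp_diff_mult[where 'a = complex, of "v (k - 1)" "v k" "u k"]
      by (simp add: V_def g_def diag_term_def mult.left_commute mult.commute)
    ultimately show ?thesis
      by (simp add: f_def right_diff_distrib)
  qed
  have "(\<Sum>n = 1..i. (\<Sum>k = n..i. complex_of_real (exp (v k - u k))) *
      ((diag_term xi u n - diag_term xi u (n - 1)) - (diag_term xi v (n - 1) - diag_term xi v (n - 2))))
    = (\<Sum>n = 1..i. (\<Sum>k = n..i. V k) * (f n - f (n - 1)))"
    by (intro sum.cong refl) (simp add: V_def f_def diff_diff_left numeral_2_eq_2)
  also have "\<dots> = (\<Sum>k = 1..i. V k * (\<Sum>n = 1..k. f n - f (n - 1)))"
    by (simp add: sum_distrib_left sum_distrib_right sum_atLeastAtMost_triangle_swap)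
  also have "\<dots> = (\<Sum>k = 1..i. g k - g (k - 1))"
    using Vf by (intro sum.cong refl) (simp only: f_partial, simp)
  also have "\<dots> = g i"
    using sum_telescope''[of 0 i g] by (simp add: g_def)
  finally show ?thesis
    by (simp add: g_def)
qed

(* Along a column x s = T_{s,j} the exponent of psiL has the terms col_term xiL j x s,
   s > j; the value 0 at s = j is the boundary value of the telescoping sums. *)
definition col_term :: "(nat \<Rightarrow> complex) \<Rightarrow> nat \<Rightarrow> (nat \<Rightarrow> real) \<Rightarrow> nat \<Rightarrow> complex" where
  "col_term xi j x s = (if j < s then xi (s - j) * complex_of_real (exp (x s - x (s - 1))) else 0)"

lemma col_term_sum_telescope:
  fixes a b :: "nat \<Rightarrow> real" and xi :: "nat \<Rightarrow> complex"
  assumes "i \<le> M"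
  shows "(\<Sum>k = i..M. complex_of_real (exp (a k - b (k + 1))) * (col_term xi i a (k + 1) - col_term xi (i + 1) b (k + 1)))
    = xi (M + 1 - i) * complex_of_real (exp (a (M + 1) - b (M + 1)))"
proof -
  define G where "G s = (if i < s then xi (s - i) * complex_of_real (exp (a s - b s)) else 0)" for s
  have "complex_of_real (exp (a k - b (k + 1))) * (col_term xi i a (k + 1) - col_term xi (i + 1) b (k + 1))
      = G (Suc k) - G k" if "i \<le> k" for k
  proof -
    have "complex_of_real (exp (a k - b (k + 1))) * col_term xi i a (k + 1) = G (Suc k)"
      using that of_real_exp_diff_mult[where 'a = complex, of "a (Suc k)" "a k" "b (Suc k)"]
      by (simp add: G_def col_term_def Suc_diff_le mult.left_commute mult.commute)
    moreover have "complex_of_real (exp (a k - b (k + 1))) * col_term xi (i + 1) b (k + 1) = G k"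
      using of_real_exp_diff_mult[where 'a = complex, of "a k" "b (Suc k)" "b k"]
      by (simp add: G_def col_term_def mult.left_commute)
    ultimately show ?thesis
      by (simp add: right_diff_distrib)
  qed
  then have "(\<Sum>k = i..M. complex_of_real (exp (a k - b (k + 1))) * (col_term xi i a (k + 1) - col_term xi (i + 1) b (k + 1)))
      = (\<Sum>k = i..M. G (Suc k) - G k)"
    by (intro sum.cong refl) simp
  also have "\<dots> = G (Suc M)"
    using sum_Suc_diff[of i M G] assms by (simp add: G_def)
  finally show ?thesis
    using assms by (simp add: G_def)
qed

definition psiR_exponent :: "nat \<Rightarrow> (nat \<Rightarrow> complex) \<Rightarrow> (nat \<Rightarrow> nat \<Rightarrow> real) \<Rightarrow> complex" where
  "psiR_exponent N xiR T = (\<Sum>i = 1..N - 1. xiR i *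
      (\<Sum>k = i..N - 1. complex_of_real (exp (Tc N T k i - Tc N T (k + 1) (i + 1)))))"

lemma psiR_eq_exp: "psiR N xiR = (\<lambda>T. exp (psiR_exponent N xiR T))"
  by (simp add: fun_eq_iff psiR_def psiR_exponent_def)

lemma psiR_exponent_has_vector_derivative:
  assumes "1 \<le> j" "j \<le> k" "k < N"
  shows "((\<lambda>t. psiR_exponent N xiR (T(k := (T k)(j := t)))) has_vector_derivative
     (\<Sum>i = 1..N - 1. \<Sum>k' = i..N - 1. (of_bool (k' = k \<and> i = j) - of_bool (k' + 1 = k \<and> i + 1 = j))
        * (xiR i * complex_of_real (exp (Tc N T k' i - Tc N T (k' + 1) (i + 1)))))) (at (T k j))"
  unfolding psiR_exponent_def Tc_fun_upd[OF assms]
  by (rule derivative_eq_intros refl | simp add: sum_distrib_left algebra_simps)+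

lemma pd_psiR:
  assumes "m + j < N"
  shows "pd N (m + j) j (psiR N xiR) T = psiR N xiR T *
    (diag_term xiR (\<lambda>n. Tc N T (m + n) n) j - diag_term xiR (\<lambda>n. Tc N T (m + n) n) (j - 1))"
proof (cases "j = 0")
  case True
  then show ?thesis by (simp add: pd_def diag_term_def)
next
  case False
  then have j: "1 \<le> j" "j \<le> m + j" "m + j < N" using assms by auto
  define w where "w i k = xiR i * complex_of_real (exp (Tc N T k i - Tc N T (k + 1) (i + 1)))" for i k
  have "pd N (m + j) j (psiR N xiR) T = psiR N xiR T *
      (\<Sum>i = 1..N - 1. \<Sum>k = i..N - 1. (of_bool (k = m + j \<and> i = j) - of_bool (k + 1 = m + j \<and> i + 1 = j)) * w i k)"
    unfolding psiR_eq_exp w_def by (rule pd_exp[OF j psiR_exponent_has_vector_derivative[OF j]])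
  also have "(\<Sum>i = 1..N - 1. \<Sum>k = i..N - 1. (of_bool (k = m + j \<and> i = j) - of_bool (k + 1 = m + j \<and> i + 1 = j)) * w i k)
      = (\<Sum>i = 1..N - 1. \<Sum>k = i..N - 1. of_bool (k = m + j \<and> i = j) * w i k)
        - (\<Sum>i = 1..N - 1. \<Sum>k = i..N - 1. of_bool (k = m + (j - 1) \<and> i = j - 1) * w i k)"
    using j by (simp add: left_diff_distrib sum_subtractf) (intro sum.cong refl arg_cong2[where f = "(*)"], auto)
  also have "\<dots> = w j (m + j) - of_bool (2 \<le> j) * w (j - 1) (m + (j - 1))"
    using j by (simp only: sum_sum_of_bool_mult finite_atLeastAtMost) auto
  also have "\<dots> = diag_term xiR (\<lambda>n. Tc N T (m + n) n) j - diag_term xiR (\<lambda>n. Tc N T (m + n) n) (j - 1)"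
    using j by (auto simp: w_def diag_term_def)
  finally show ?thesis .
qed

definition psiL_exponent :: "nat \<Rightarrow> real \<Rightarrow> (nat \<Rightarrow> real) \<Rightarrow> (nat \<Rightarrow> complex)
                    \<Rightarrow> (nat \<Rightarrow> nat \<Rightarrow> real) \<Rightarrow> complex" where
  "psiL_exponent N hbar lam xiL T = (\<Sum>k = 1..N - 1. \<Sum>i = 1..k.
          (mu N hbar lam k - mu N hbar lam (k + 1)) * complex_of_real (Tc N T k i))
    + (\<Sum>i = 1..N - 1. xiL i *
          (\<Sum>k = 1..N - i. complex_of_real (exp (Tc N T (k + i) k - Tc N T (k + i - 1) k))))"

lemma psiL_eq_exp: "psiL N hbar lam xiL = (\<lambda>T. exp (psiL_exponent N hbar lam xiL T))"
  by (simp add: fun_eq_iff psiL_def psiL_exponent_def)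

lemma psiL_exponent_has_vector_derivative:
  assumes "1 \<le> j" "j \<le> s" "s < N"
  shows "((\<lambda>t. psiL_exponent N hbar lam xiL (T(s := (T s)(j := t)))) has_vector_derivative
     (\<Sum>k = 1..N - 1. \<Sum>i = 1..k. of_bool (k = s \<and> i = j) * (mu N hbar lam k - mu N hbar lam (k + 1)))
     + (\<Sum>i = 1..N - 1. \<Sum>k = 1..N - i.
          (of_bool (k + i = s \<and> k = j) - of_bool (k + i - 1 = s \<and> k = j))
          * (xiL i * complex_of_real (exp (Tc N T (k + i) k - Tc N T (k + i - 1) k))))) (at (T s j))"
  unfolding psiL_exponent_def Tc_fun_upd[OF assms]
  by (rule derivative_eq_intros refl | simp add: sum_distrib_left algebra_simps)+

lemma pd_psiL:
  assumes "1 \<le> j" "j \<le> s" "s < N"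
  shows "pd N s j (psiL N hbar lam xiL) T = psiL N hbar lam xiL T *
    ((mu N hbar lam s - mu N hbar lam (s + 1))
      + col_term xiL j (\<lambda>r. Tc N T r j) s - col_term xiL j (\<lambda>r. Tc N T r j) (s + 1))"
proof -
  define c where "c k = mu N hbar lam k - mu N hbar lam (k + 1)" for k
  define w where "w i k = xiL i * complex_of_real (exp (Tc N T (k + i) k - Tc N T (k + i - 1) k))" for i k
  have "pd N s j (psiL N hbar lam xiL) T = psiL N hbar lam xiL T *
     ((\<Sum>k = 1..N - 1. \<Sum>i = 1..k. of_bool (k = s \<and> i = j) * c k)
     + (\<Sum>i = 1..N - 1. \<Sum>k = 1..N - i. (of_bool (k + i = s \<and> k = j) - of_bool (k + i - 1 = s \<and> k = j)) * w i k))"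
    unfolding psiL_eq_exp c_def w_def by (rule pd_exp[OF assms psiL_exponent_has_vector_derivative[OF assms]])
  also have "(\<Sum>k = 1..N - 1. \<Sum>i = 1..k. of_bool (k = s \<and> i = j) * c k) = c s"
  proof -
    have "(\<Sum>k = 1..N - 1. \<Sum>i = 1..k. of_bool (k = s \<and> i = j) * c k)
        = (\<Sum>k = 1..N - 1. \<Sum>i = 1..k. of_bool (i = j \<and> k = s) * c k)"
      by (simp only: conj_commute)
    then show ?thesis
      using assms by (simp only: sum_sum_of_bool_mult finite_atLeastAtMost) auto
  qed
  also have "(\<Sum>i = 1..N - 1. \<Sum>k = 1..N - i. (of_bool (k + i = s \<and> k = j) - of_bool (k + i - 1 = s \<and> k = j)) * w i k)
      = (\<Sum>i = 1..N - 1. \<Sum>k = 1..N - i. of_bool (k = j \<and> i = s - j) * w i k)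
        - (\<Sum>i = 1..N - 1. \<Sum>k = 1..N - i. of_bool (k = j \<and> i = s + 1 - j) * w i k)"
    unfolding left_diff_distrib sum_subtractf
    using assms by (intro arg_cong2[where f = minus] sum.cong refl arg_cong2[where f = times] arg_cong[where f = of_bool]) auto
  also have "\<dots> = col_term xiL j (\<lambda>r. Tc N T r j) s - col_term xiL j (\<lambda>r. Tc N T r j) (s + 1)"
  proof -
    have "of_bool (s - j \<in> {1..N - 1} \<and> j \<in> {1..N - (s - j)}) * w (s - j) j = col_term xiL j (\<lambda>r. Tc N T r j) s"
      using assms by (auto simp: w_def col_term_def)
    moreover have "of_bool (s + 1 - j \<in> {1..N - 1} \<and> j \<in> {1..N - (s + 1 - j)}) * w (s + 1 - j) j
        = col_term xiL j (\<lambda>r. Tc N T r j) (s + 1)"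
      using assms by (auto simp: w_def col_term_def)
    ultimately show ?thesis
      by (simp only: sum_sum_of_bool_mult finite_atLeastAtMost)
  qed
  finally show ?thesis
    by (simp add: c_def add_diff_eq)
qed

lemma mu_diff_plus_sum_pd_psiL:
  assumes "1 \<le> i" "i \<le> k" "k < N"
  shows "(mu N hbar lam i - mu N hbar lam (i + 1)) * psiL N hbar lam xiL T
      + (\<Sum>s = i..k. pd N s (i + 1) (psiL N hbar lam xiL) T - pd N s i (psiL N hbar lam xiL) T)
    = psiL N hbar lam xiL T *
      (col_term xiL i (\<lambda>r. Tc N T r i) (k + 1) - col_term xiL (i + 1) (\<lambda>r. Tc N T r (i + 1)) (k + 1))"
proof -
  define P where "P = psiL N hbar lam xiL T"
  define c where "c = mu N hbar lam i - mu N hbar lam (i + 1)"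
  define F where "F s = col_term xiL i (\<lambda>r. Tc N T r i) s - col_term xiL (i + 1) (\<lambda>r. Tc N T r (i + 1)) s" for s
  have "pd N s (i + 1) (psiL N hbar lam xiL) T - pd N s i (psiL N hbar lam xiL) T
      = P * (F (Suc s) - F s) - (if s = i then c * P else 0)" if "i \<le> s" "s \<le> k" for s
  proof (cases "s = i")
    case True
    then show ?thesis
      using assms pd_psiL[of i i N hbar lam xiL T]
      by (simp add: pd_def P_def F_def c_def col_term_def algebra_simps)
  next
    case False
    have pd_s: "pd N s (i + 1) (psiL N hbar lam xiL) T = P * ((mu N hbar lam s - mu N hbar lam (s + 1))
        + col_term xiL (i + 1) (\<lambda>r. Tc N T r (i + 1)) s - col_term xiL (i + 1) (\<lambda>r. Tc N T r (i + 1)) (s + 1))"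
         "pd N s i (psiL N hbar lam xiL) T = P * ((mu N hbar lam s - mu N hbar lam (s + 1))
        + col_term xiL i (\<lambda>r. Tc N T r i) s - col_term xiL i (\<lambda>r. Tc N T r i) (s + 1))"
      unfolding P_def using False that assms by (simp_all add: pd_psiL)
    show ?thesis
      unfolding pd_s using False by (simp add: F_def algebra_simps)
  qed
  then have "(\<Sum>s = i..k. pd N s (i + 1) (psiL N hbar lam xiL) T - pd N s i (psiL N hbar lam xiL) T)
      = (\<Sum>s = i..k. P * (F (Suc s) - F s)) - (\<Sum>s = i..k. if s = i then c * P else 0)"
    by (simp add: sum_subtractf)
  also have "\<dots> = P * F (Suc k) - c * P"
  proof -
    have "F i = 0"
      by (simp add: F_def col_term_def)
    then show ?thesis
      using assms sum_Suc_diff[of i k F] by (simp flip: sum_distrib_left)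
  qed
  finally show ?thesis
    by (simp add: P_def c_def F_def)
qed

lemma E_up_psiR:
  assumes "1 \<le> i" "i < N"
  shows "E_up N i (psiR N xiR) T = xiR i * psiR N xiR T"
proof -
  define m where "m = N - i - 1"
  define u where "u n = Tc N T (m + n) n" for n
  define v where "v n = Tc N T (Suc m + n) n" for n
  have rows: "N + n - i = Suc m + n" "N + n - i - 1 = m + n" for n
    using assms by (simp_all add: m_def)
  have coeff: "Tc N T (N + k - i) k - Tc N T (N + k - i - 1) k = v k - u k" for k
    by (simp add: rows u_def v_def)
  have pd_u: "pd N (N + n - i - 1) n (psiR N xiR) T = psiR N xiR T * (diag_term xiR u n - diag_term xiR u (n - 1))"
    if "n \<le> i" for n
    using pd_psiR[of m n N xiR T] that assms unfolding rows u_def m_def by simp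
  have pd_v: "pd N (N + n - i - 1) (n - 1) (psiR N xiR) T
      = psiR N xiR T * (diag_term xiR v (n - 1) - diag_term xiR v (n - 2))" if "1 \<le> n" "n \<le> i" for n
  proof -
    have "N + n - i - 1 = Suc m + (n - 1)" "n - 1 - 1 = n - 2"
      using that assms by (simp_all add: m_def)
    then show ?thesis
      using pd_psiR[of "Suc m" "n - 1" N xiR T] that assms unfolding v_def m_def by simp
  qed
  have "E_up N i (psiR N xiR) T = psiR N xiR T *
      (\<Sum>n = 1..i. (\<Sum>k = n..i. complex_of_real (exp (v k - u k))) *
        ((diag_term xiR u n - diag_term xiR u (n - 1)) - (diag_term xiR v (n - 1) - diag_term xiR v (n - 2))))"
    unfolding E_up_def coeff sum_distrib_left
    by (intro sum.cong refl) (simp only: atLeastAtMost_iff pd_u pd_v, simp add: algebra_simps)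
  also have "\<dots> = xiR i * psiR N xiR T"
    unfolding diag_term_tail_sums_telescope using assms by (simp add: u_def v_def m_def Tc_def)
  finally show ?thesis .
qed

lemma E_down_psiL:
  assumes "1 \<le> i" "i < N"
  shows "E_down N hbar lam i (psiL N hbar lam xiL) T = xiL (N - i) * psiL N hbar lam xiL T"
proof -
  have "E_down N hbar lam i (psiL N hbar lam xiL) T = psiL N hbar lam xiL T *
      (\<Sum>k = i..N - 1. complex_of_real (exp (Tc N T k i - Tc N T (k + 1) (i + 1)))
        * (col_term xiL i (\<lambda>r. Tc N T r i) (k + 1) - col_term xiL (i + 1) (\<lambda>r. Tc N T r (i + 1)) (k + 1)))"
    unfolding E_down_def sum_distrib_left
    by (intro sum.cong refl, subst mu_diff_plus_sum_pd_psiL) (use assms in \<open>auto simp: mult_ac\<close>)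
  also have "\<dots> = xiL (N - i) * psiL N hbar lam xiL T"
    using assms col_term_sum_telescope[of i "N - 1" "\<lambda>r. Tc N T r i" "\<lambda>r. Tc N T r (i + 1)" xiL]
    by (simp add: Tc_def)
  finally show ?thesis .
qed

theorem proposition2:
  fixes N :: nat and hbar :: real and lam :: "nat \<Rightarrow> real"
    and xiR xiL :: "nat \<Rightarrow> complex" and i :: nat and T :: "nat \<Rightarrow> nat \<Rightarrow> real"
  assumes "N \<ge> 2" and "hbar > 0"
    and "\<forall>j \<in> {1..N - 1}. xiR j \<noteq> 0 \<and> xiL j \<noteq> 0"
    and "i \<in> {1..N - 1}"
  shows "E_up N i (psiR N xiR) T = xiR i * psiR N xiR T
       \<and> E_down N hbar lam i (psiL N hbar lam xiL) T = xiL (N - i) * psiL N hbar lam xiL T"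
proof -
  have "1 \<le> i" "i < N"
    using assms(1,4) by auto
  then show ?thesis
    by (simp add: E_up_psiR E_down_psiL)
qed

end
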